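(* Let $R$ be a commutative ring with identity, let $S$ be a semigroup, and suppose $S=S_1\sqcup S_2$ is a disjoint union of subsets. Let $R\,S$ be the semigroup algebra of $S$ over $R$, and define the $R$-linear map $P:R\,S\to R\,S$ on the basis $S$ by $P(x)=x$ if $x\in S_1$ and $P(x)=0$ if $x\in S_2$. Then $(R\,S,P)$ is a Rota-Baxter algebra (of weight $-1$) if and only if $S_1$ and $S_2$ are subsemigroups of $S$.
   Context: A Rota-Baxter algebra (of weight $-1$) is an associative $R$-algebra $A$ with an $R$-linear operator $P:A\to A$ satisfying $P(x)P(y)=P(xP(y))+P(P(x)y)-P(xy)$ for all $x,y\in A$. A subsemigroup is a subset closed under the semigroup operation. *)

theory Defs
  imports Main
begin

text \<open>The semigroup algebra R S: elements are finitely supported functions S \<Rightarrow> R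
  (formal finite R-linear combinations of elements of S).\<close>

definition supp :: "('s \<Rightarrow> 'r::zero) \<Rightarrow> 's set" where
  "supp f = {x. f x \<noteq> 0}"

definition sgalg :: "('s \<Rightarrow> 'r::zero) set" where
  "sgalg = {f. finite (supp f)}"

definition sgmult :: "('s::semigroup_mult \<Rightarrow> 'r::comm_ring_1) \<Rightarrow> ('s \<Rightarrow> 'r) \<Rightarrow> ('s \<Rightarrow> 'r)" where
  "sgmult f g = (\<lambda>z. \<Sum>(x, y) \<in> {(x, y). x \<in> supp f \<and> y \<in> supp g \<and> x * y = z}. f x * g y)"

definition projP :: "'s set \<Rightarrow> ('s \<Rightarrow> 'r::zero) \<Rightarrow> ('s \<Rightarrow> 'r)" where
  "projP S1 f = (\<lambda>x. if x \<in> S1 then f x else 0)"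

definition rota_baxter_neg1 :: "(('s::semigroup_mult \<Rightarrow> 'r::comm_ring_1) \<Rightarrow> ('s \<Rightarrow> 'r)) \<Rightarrow> bool" where
  "rota_baxter_neg1 P \<longleftrightarrow>
     (\<forall>f\<in>sgalg. \<forall>g\<in>sgalg.
        sgmult (P f) (P g) = (\<lambda>z. P (sgmult f (P g)) z + P (sgmult (P f) g) z - P (sgmult f g) z))"

definition subsemigroup :: "'s::semigroup_mult set \<Rightarrow> bool" where
  "subsemigroup A \<longleftrightarrow> (\<forall>x\<in>A. \<forall>y\<in>A. x * y \<in> A)"

end

theory Submission
  imports Defs
begin

text \<open>Since P acts diagonally on the basis S, the Rota-Baxter identity holds on R S iff it holds
  on pairs of basis elements x, y, where (evaluated at x y) it says that the indicator function
  \<chi> of S1 satisfies \<chi>(x) \<chi>(y) = \<chi>(x y) (\<chi>(x) + \<chi>(y) - 1). For x, y \<in> S1 this forces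
  \<chi>(x y) = 1, for x, y \<notin> S1 it forces \<chi>(x y) = 0, and for mixed pairs both sides vanish.\<close>

lemma sgmult_eq_double_sum:
  fixes f g :: "'s::semigroup_mult \<Rightarrow> 'r::comm_ring_1"
  assumes "finite A" "supp f \<subseteq> A" and "finite B" "supp g \<subseteq> B"
  shows "sgmult f g z = (\<Sum>x\<in>A. \<Sum>y\<in>B. if x * y = z then f x * g y else 0)"
proof -
  have fin: "finite (supp f \<times> supp g)"
    using assms finite_subset by blast
  have "sgmult f g z = (\<Sum>p \<in> {p \<in> supp f \<times> supp g. fst p * snd p = z}. f (fst p) * g (snd p))"
    unfolding sgmult_def by (rule sum.cong) auto
  also have "\<dots> = (\<Sum>p \<in> supp f \<times> supp g. if fst p * snd p = z then f (fst p) * g (snd p) else 0)"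
    using fin by (simp add: sum.inter_filter)
  also have "\<dots> = (\<Sum>p \<in> A \<times> B. if fst p * snd p = z then f (fst p) * g (snd p) else 0)"
    by (rule sum.mono_neutral_left) (use assms in \<open>auto simp: supp_def\<close>)
  also have "\<dots> = (\<Sum>x\<in>A. \<Sum>y\<in>B. if x * y = z then f x * g y else 0)"
    by (simp add: sum.cartesian_product case_prod_beta)
  finally show ?thesis .
qed

lemma sgmult_supp_singleton:
  fixes f g :: "'s::semigroup_mult \<Rightarrow> 'r::comm_ring_1"
  assumes "supp f \<subseteq> {x}" and "supp g \<subseteq> {y}"
  shows "sgmult f g (x * y) = f x * g y"
  using sgmult_eq_double_sum[of "{x}" f "{y}" g] assms by simp

lemma supp_projP_subset: "supp (projP S1 f) \<subseteq> supp f"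
  by (auto simp: supp_def projP_def)

lemma projP_eq_indicator_mult: "projP S1 (f :: 'a \<Rightarrow> 'r::semiring_1) x = of_bool (x \<in> S1) * f x"
  by (auto simp: projP_def)

lemma rota_baxter_projP_iff_indicator:
  fixes S1 :: "'s::semigroup_mult set"
  shows "rota_baxter_neg1 (projP S1 :: ('s \<Rightarrow> 'r::comm_ring_1) \<Rightarrow> ('s \<Rightarrow> 'r)) \<longleftrightarrow>
    (\<forall>x y. (of_bool (x \<in> S1) * of_bool (y \<in> S1) :: 'r) =
       of_bool (x * y \<in> S1) * (of_bool (x \<in> S1) + of_bool (y \<in> S1) - 1))"
    (is "?rb \<longleftrightarrow> (\<forall>x y. ?ind x y)")
proof
  assume rb: ?rb
  show "\<forall>x y. ?ind x y"
  proof (intro allI)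
    fix x y :: 's
    define e :: "'s \<Rightarrow> 's \<Rightarrow> 'r" where "e u = (\<lambda>z. if z = u then 1 else 0)" for u
    have supp_e: "supp (e u) \<subseteq> {u}" for u
      by (auto simp: supp_def e_def)
    then have e_sgalg: "e u \<in> sgalg" for u
      by (auto simp: sgalg_def intro: finite_subset)
    have supp_Pe: "supp (projP S1 (e u)) \<subseteq> {u}" for u
      using supp_projP_subset supp_e by (rule order_trans)
    have "sgmult (projP S1 (e x)) (projP S1 (e y)) (x * y) =
        projP S1 (sgmult (e x) (projP S1 (e y))) (x * y)
        + projP S1 (sgmult (projP S1 (e x)) (e y)) (x * y)
        - projP S1 (sgmult (e x) (e y)) (x * y)"
      using rb e_sgalg unfolding rota_baxter_neg1_def by metis
    moreover have "e u u = 1" for u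
      by (simp add: e_def)
    ultimately show "?ind x y"
      by (simp add: sgmult_supp_singleton supp_e supp_Pe projP_eq_indicator_mult algebra_simps)
  qed
next
  assume ind: "\<forall>x y. ?ind x y"
  show ?rb
    unfolding rota_baxter_neg1_def
  proof (intro ballI ext)
    fix f g :: "'s \<Rightarrow> 'r" and z :: 's
    assume "f \<in> sgalg" "g \<in> sgalg"
    then have fin: "finite (supp f)" "finite (supp g)"
      by (auto simp: sgalg_def)
    let ?dsum = "\<lambda>f' g'. \<Sum>x\<in>supp f. \<Sum>y\<in>supp g. if x * y = z then f' x * g' y else 0"
    have expand: "sgmult f' g' z = ?dsum f' g'"
      if "supp f' \<subseteq> supp f" "supp g' \<subseteq> supp g" for f' g' :: "'s \<Rightarrow> 'r"
      using sgmult_eq_double_sum[OF fin(1) that(1) fin(2) that(2)] by simp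
    have summand_eq: "(if x * y = z then projP S1 f x * projP S1 g y else 0) =
        of_bool (z \<in> S1) * ((if x * y = z then f x * projP S1 g y else 0)
          + (if x * y = z then projP S1 f x * g y else 0) - (if x * y = z then f x * g y else 0))"
      for x y
      using ind[rule_format, of x y]
      by (auto simp: projP_eq_indicator_mult algebra_simps)
    have "sgmult (projP S1 f) (projP S1 g) z = of_bool (z \<in> S1) *
        (sgmult f (projP S1 g) z + sgmult (projP S1 f) g z - sgmult f g z)"
      unfolding expand[OF supp_projP_subset supp_projP_subset] expand[OF order_refl supp_projP_subset]
        expand[OF supp_projP_subset order_refl] expand[OF order_refl order_refl] summand_eq
      by (simp add: sum.distrib sum_subtractf sum_distrib_left)
    then show "sgmult (projP S1 f) (projP S1 g) z =
        projP S1 (sgmult f (projP S1 g)) z + projP S1 (sgmult (projP S1 f) g) z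
        - projP S1 (sgmult f g) z"
      by (simp add: projP_eq_indicator_mult algebra_simps)
  qed
qed

lemma indicator_identity_iff_subsemigroups:
  fixes S1 :: "'s::semigroup_mult set"
  shows "(\<forall>x y. (of_bool (x \<in> S1) * of_bool (y \<in> S1) :: 'r::comm_ring_1) =
       of_bool (x * y \<in> S1) * (of_bool (x \<in> S1) + of_bool (y \<in> S1) - 1))
    \<longleftrightarrow> subsemigroup S1 \<and> subsemigroup (- S1)"
  unfolding subsemigroup_def by (auto simp: of_bool_def split: if_splits)

theorem corollary2p2:
  fixes S1 S2 :: "'s::semigroup_mult set"
  assumes "S1 \<inter> S2 = {}" and "S1 \<union> S2 = UNIV"
  shows "rota_baxter_neg1 (projP S1 :: ('s \<Rightarrow> 'r::comm_ring_1) \<Rightarrow> ('s \<Rightarrow> 'r))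
           \<longleftrightarrow> subsemigroup S1 \<and> subsemigroup S2"
proof -
  have "S2 = - S1"
    using assms by auto
  then show ?thesis
    using rota_baxter_projP_iff_indicator indicator_identity_iff_subsemigroups by metis
qed

end
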